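(* (1) If $\{T_1,\dots,T_n\}$ is an independent family of random $d\times d$ positive-semidefinite matrices and $W := \sum_{i=1}^n T_i$, then $$\mathbb{E}\|W\| \ge \frac14\Big[\|\mathbb{E}W\|^{1/2} + \big(\mathbb{E}\max_i\|T_i\|\big)^{1/2}\Big]^2.$$ (2) If $\{Y_1,\dots,Y_n\}$ is an independent family of random $d\times d$ Hermitian matrices with $\mathbb{E}Y_i=0$ for each $i$ and $X := \sum_{i=1}^n Y_i$, then $$\big(\mathbb{E}\|X\|^2\big)^{1/2} \ge \frac12\|\mathbb{E}X^2\|^{1/2} + \frac14\big(\mathbb{E}\max_i\|Y_i\|^2\big)^{1/2}.$$ (3) If $\{S_1,\dots,S_n\}$ is an independent family of random $d_1\times d_2$ complex matrices with $\mathbb{E}S_i=0$ for each $i$ and $Z := \sum_{i=1}^n S_i$, then $$\big(\mathbb{E}\|Z\|^2\big)^{1/2} \ge \frac12\max\Big\{\|\mathbb{E}[ZZ^*]\|^{1/2},\ \|\mathbb{E}[Z^*Z]\|^{1/2}\Big\} + \frac14\big(\mathbb{E}\max_i\|S_i\|^2\big)^{1/2}.$$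
   Context: $\|\cdot\|$ is the spectral norm, ${}^*$ the conjugate transpose. Expectations of random matrices are entrywise and assumed to exist where they appear as hypotheses; other quantities may be $+\infty$, with inequalities understood in $[0,\infty]$. *)

theory Defs
  imports "HOL-Probability.Probability"
begin

definition spec_norm :: "complex^'n^'m \<Rightarrow> real" where
  "spec_norm A = onorm (\<lambda>x. A *v x)"

definition ctrans :: "complex^'n^'m \<Rightarrow> complex^'m^'n" where
  "ctrans A = (\<chi> i j. cnj (A $ j $ i))"

definition hermitian :: "complex^'n^'n \<Rightarrow> bool" where
  "hermitian A \<longleftrightarrow> ctrans A = A"

definition psd :: "complex^'n^'n \<Rightarrow> bool" where
  "psd A \<longleftrightarrow> hermitian A \<and> (\<forall>x. 0 \<le> Re (\<Sum>i\<in>UNIV. cnj (x $ i) * (A *v x) $ i))"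

definition esqrt :: "ennreal \<Rightarrow> ennreal" where
  "esqrt x = (if x = \<top> then \<top> else ennreal (sqrt (enn2real x)))"

end

theory Submission
  imports Defs
begin

text \<open>Each bound says that two quantities are dominated by the left-hand side. In (1),
  \<open>\<parallel>E W\<parallel> \<le> E\<parallel>W\<parallel>\<close>, and a positive semidefinite summand satisfies \<open>\<parallel>T\<^sub>k\<parallel> \<le> \<parallel>W\<parallel>\<close> because
  its quadratic form is dominated by that of \<open>W\<close>. In (2) and (3), \<open>\<parallel>E Z Z\<^sup>*\<parallel> \<le> E\<parallel>Z\<parallel>\<^sup>2\<close>
  likewise, and the maximal summand is controlled by symmetrization. With an
  independent copy \<open>S'\<^sub>i\<close> of each summand, Jensen's inequality gives
  \<open>E max \<parallel>S\<^sub>i\<parallel>\<^sup>2 \<le> E max \<parallel>S\<^sub>i - S'\<^sub>i\<parallel>\<^sup>2\<close>. Averaging over the \<open>2\<^sup>n\<close> sign patterns dominates each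
  \<open>\<parallel>S\<^sub>i - S'\<^sub>i\<parallel>\<^sup>2\<close>, every signed sum \<open>\<Sum> \<plusminus>(S\<^sub>i - S'\<^sub>i)\<close> has the law of \<open>Z - Z'\<close>, and
  \<open>E\<parallel>Z - Z'\<parallel>\<^sup>2 \<le> 4 E\<parallel>Z\<parallel>\<^sup>2\<close>. Hence \<open>E max \<parallel>S\<^sub>i\<parallel>\<^sup>2 \<le> 4 E\<parallel>Z\<parallel>\<^sup>2\<close>; (2) is the case
  \<open>Z\<^sup>* = Z\<close> of (3).\<close>

section \<open>Spectral norm\<close>

lemma spec_norm_nonneg: "0 \<le> spec_norm A"
  unfolding spec_norm_def by (rule onorm_pos_le) simp

lemma norm_mult_vec_le_spec_norm: "norm (A *v x) \<le> spec_norm A * norm x"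
  unfolding spec_norm_def by (rule onorm) simp

lemma spec_norm_leI: "0 \<le> b \<Longrightarrow> (\<And>x. norm (A *v x) \<le> b * norm x) \<Longrightarrow> spec_norm A \<le> b"
  unfolding spec_norm_def by (rule onorm_bound)

lemma spec_norm_triangle: "spec_norm (A + B) \<le> spec_norm A + spec_norm B"
proof (rule spec_norm_leI)
  show "0 \<le> spec_norm A + spec_norm B" by (simp add: add_nonneg_nonneg spec_norm_nonneg)
  fix x
  have "norm ((A + B) *v x) \<le> norm (A *v x) + norm (B *v x)"
    by (simp add: matrix_vector_mult_add_rdistrib norm_triangle_ineq)
  also have "\<dots> \<le> (spec_norm A + spec_norm B) * norm x"
    using norm_mult_vec_le_spec_norm[of A x] norm_mult_vec_le_spec_norm[of B x] by (simp add: distrib_right)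
  finally show "norm ((A + B) *v x) \<le> (spec_norm A + spec_norm B) * norm x" .
qed

lemma mult_vec_scaleR_left: "(c *\<^sub>R A) *v x = c *\<^sub>R ((A::complex^'n^'m) *v x)"
  by (simp add: vec_eq_iff matrix_vector_mult_def scaleR_sum_right)

lemma spec_norm_scaleR: "spec_norm (c *\<^sub>R A) = \<bar>c\<bar> * spec_norm A"
  unfolding spec_norm_def mult_vec_scaleR_left by (simp add: onorm_scaleR)

lemma spec_norm_uminus [simp]: "spec_norm (- A) = spec_norm A"
  using spec_norm_scaleR[of "-1" A] by simp

lemma spec_norm_zero [simp]: "spec_norm 0 = 0"
  using spec_norm_scaleR[of 0] by simp

lemma spec_norm_matrix_mult_le: "spec_norm (A ** B) \<le> spec_norm A * spec_norm B"
proof -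
  have "spec_norm (A ** B) = onorm ((\<lambda>x. A *v x) \<circ> (\<lambda>x. B *v x))"
    unfolding spec_norm_def by (simp add: o_def matrix_vector_mul_assoc)
  also have "\<dots> \<le> spec_norm A * spec_norm B"
    unfolding spec_norm_def by (rule onorm_compose) simp_all
  finally show ?thesis .
qed

lemma spec_norm_power2_add_le: "(spec_norm (A + B))\<^sup>2 \<le> 2 * (spec_norm A)\<^sup>2 + 2 * (spec_norm B)\<^sup>2"
proof -
  have "(spec_norm (A + B))\<^sup>2 \<le> (spec_norm A + spec_norm B)\<^sup>2"
    by (intro power_mono spec_norm_triangle spec_norm_nonneg)
  also have "\<dots> \<le> 2 * (spec_norm A)\<^sup>2 + 2 * (spec_norm B)\<^sup>2"
    using sum_squares_ge_zero[of "spec_norm A - spec_norm B" 0] by (simp add: power2_eq_square algebra_simps)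
  finally show ?thesis .
qed

lemma norm_mult_vec_le: "norm ((A::complex^'n^'m) *v x) \<le> norm A * norm x"
proof -
  have row: "norm ((A *v x) $ i) \<le> norm (A $ i) * norm x" for i
  proof -
    have "norm ((A *v x) $ i) \<le> (\<Sum>j\<in>UNIV. \<bar>norm (A $ i $ j)\<bar> * \<bar>norm (x $ j)\<bar>)"
      unfolding matrix_vector_mult_def by (simp add: norm_sum[THEN order_trans] norm_mult)
    also have "\<dots> \<le> norm (A $ i) * norm x"
      unfolding norm_vec_def by (rule L2_set_mult_ineq)
    finally show ?thesis .
  qed
  have "norm (A *v x) \<le> L2_set (\<lambda>i. norm (A $ i) * norm x) UNIV"
    unfolding norm_vec_def[of "A *v x"] by (rule L2_set_mono) (simp_all add: row)
  also have "\<dots> = norm A * norm x"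
    by (simp add: L2_set_left_distrib norm_vec_def)
  finally show ?thesis .
qed

lemma spec_norm_le_norm: "spec_norm A \<le> norm A"
  by (rule spec_norm_leI) (simp_all add: norm_mult_vec_le)

lemma continuous_on_spec_norm: "continuous_on UNIV spec_norm"
proof (rule lipschitz_on_continuous_on)
  show "1-lipschitz_on UNIV spec_norm"
  proof (rule lipschitz_onI)
    fix A B :: "complex^'n^'m"
    have "spec_norm A \<le> spec_norm B + spec_norm (A - B)" "spec_norm B \<le> spec_norm A + spec_norm (A - B)"
      using spec_norm_triangle[of B "A - B"] spec_norm_triangle[of A "B - A"] minus_diff_eq[of A B]
      by (simp_all, metis spec_norm_uminus)
    then have "dist (spec_norm A) (spec_norm B) \<le> spec_norm (A - B)"
      by (simp add: dist_real_def)
    also have "\<dots> \<le> 1 * dist A B"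
      using spec_norm_le_norm[of "A - B"] by (simp add: dist_norm)
    finally show "dist (spec_norm A) (spec_norm B) \<le> 1 * dist A B" .
  qed simp
qed

lemma borel_measurable_spec_norm [measurable]: "spec_norm \<in> borel_measurable borel"
  by (rule borel_measurable_continuous_onI[OF continuous_on_spec_norm])

section \<open>Adjoints and positive semidefinite matrices\<close>

lemma inner_vec_complex: "inner u v = Re (\<Sum>i\<in>UNIV. cnj (u $ i) * v $ i)"
  for u v :: "complex^'n"
  by (simp add: inner_vec_def inner_complex_def Re_sum)

lemma inner_ctrans_mult_vec: "inner (ctrans A *v x) y = inner x (A *v y)"
proof -
  have "(\<Sum>j\<in>UNIV. cnj ((ctrans A *v x) $ j) * y $ j)
      = (\<Sum>j\<in>UNIV. \<Sum>i\<in>UNIV. cnj (x $ i) * A $ i $ j * y $ j)"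
    by (simp add: ctrans_def matrix_vector_mult_def sum_distrib_left sum_distrib_right mult_ac)
  also have "\<dots> = (\<Sum>i\<in>UNIV. cnj (x $ i) * (A *v y) $ i)"
    by (subst sum.swap) (simp add: matrix_vector_mult_def sum_distrib_left mult.assoc)
  finally show ?thesis by (simp add: inner_vec_complex)
qed

lemma spec_norm_ctrans_le: "spec_norm (ctrans A) \<le> spec_norm A"
proof (rule spec_norm_leI)
  show "0 \<le> spec_norm A" by (rule spec_norm_nonneg)
  fix y
  let ?u = "ctrans A *v y"
  have "(norm ?u)\<^sup>2 = inner y (A *v ?u)"
    by (simp add: power2_norm_eq_inner inner_ctrans_mult_vec[symmetric])
  also have "\<dots> \<le> norm y * (spec_norm A * norm ?u)"
    by (rule order_trans[OF norm_cauchy_schwarz]) (simp add: mult_left_mono norm_mult_vec_le_spec_norm)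
  finally have "norm ?u * norm ?u \<le> (spec_norm A * norm y) * norm ?u"
    by (simp add: power2_eq_square mult_ac)
  then show "norm ?u \<le> spec_norm A * norm y"
    by (cases "norm ?u = 0") (simp_all add: spec_norm_nonneg)
qed

lemma ctrans_add: "ctrans (A + B) = ctrans A + ctrans B"
  unfolding ctrans_def by (simp add: vec_eq_iff)

lemma ctrans_sum: "ctrans (\<Sum>i\<in>I. A i) = (\<Sum>i\<in>I. ctrans (A i))"
  by (induction I rule: infinite_finite_induct)
     (simp_all add: ctrans_add, simp_all add: ctrans_def vec_eq_iff)

lemma spec_norm_mult_ctrans_le: "spec_norm (A ** ctrans A) \<le> (spec_norm A)\<^sup>2"
  using spec_norm_matrix_mult_le[of A "ctrans A"] spec_norm_ctrans_le[of A]
  by (simp add: power2_eq_square mult_left_mono[OF _ spec_norm_nonneg] order_trans)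

lemma spec_norm_ctrans_mult_le: "spec_norm (ctrans A ** A) \<le> (spec_norm A)\<^sup>2"
  using spec_norm_matrix_mult_le[of "ctrans A" A] spec_norm_ctrans_le[of A]
  by (simp add: power2_eq_square mult_right_mono[OF _ spec_norm_nonneg] order_trans)

lemma sum_mult_vec: "(\<Sum>i\<in>I. A i) *v x = (\<Sum>i\<in>I. A i *v x)"
  by (induction I rule: infinite_finite_induct) (simp_all add: matrix_vector_mult_add_rdistrib)

lemma psd_iff_inner: "psd A \<longleftrightarrow> hermitian A \<and> (\<forall>x. 0 \<le> inner x (A *v x))"
  by (simp add: psd_def inner_vec_complex)

lemma hermitian_inner_commute: "hermitian T \<Longrightarrow> inner y (T *v x) = inner x (T *v y)"
  unfolding hermitian_def using inner_ctrans_mult_vec[of T y x] by (simp add: inner_commute)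

lemma psd_polarization_le:
  assumes "psd T"
  shows "4 * inner x (T *v y) \<le> inner (x + y) (T *v (x + y))"
proof -
  have "0 \<le> inner (x - y) (T *v (x - y))" and "inner y (T *v x) = inner x (T *v y)"
    using assms hermitian_inner_commute by (auto simp: psd_iff_inner)
  then show ?thesis
    by (simp add: matrix_vector_right_distrib matrix_vector_mult_diff_distrib
        inner_add_left inner_add_right inner_diff_left inner_diff_right)
qed

lemma inner_mult_vec_le_spec_norm: "inner z (A *v z) \<le> spec_norm A * (norm z)\<^sup>2"
proof -
  have "inner z (A *v z) \<le> norm z * (spec_norm A * norm z)"
    by (rule order_trans[OF norm_cauchy_schwarz]) (simp add: mult_left_mono norm_mult_vec_le_spec_norm)
  then show ?thesis by (simp add: power2_eq_square mult_ac)
qed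

text \<open>Test the polarization inequality with \<open>T y\<close> rescaled to the length of \<open>y\<close>.\<close>
lemma psd_spec_norm_le:
  assumes T: "psd T" and c: "0 \<le> c" and form: "\<And>z. inner z (T *v z) \<le> c * (norm z)\<^sup>2"
  shows "spec_norm T \<le> c"
proof (rule spec_norm_leI[OF c])
  fix y
  let ?u = "T *v y"
  show "norm ?u \<le> c * norm y"
  proof (cases "?u = 0")
    case True then show ?thesis using c by simp
  next
    case False
    define x where "x = (norm y / norm ?u) *\<^sub>R ?u"
    have "inner x ?u = norm y * norm ?u"
      using False by (simp add: x_def power2_norm_eq_inner[symmetric] power2_eq_square)
    then have "4 * (norm y * norm ?u) \<le> c * (norm (x + y))\<^sup>2"
      using psd_polarization_le[OF T, of x y] form[of "x + y"] by simp
    also have "\<dots> \<le> c * (2 * norm y)\<^sup>2"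
      using False norm_triangle_ineq[of x y]
      by (intro mult_left_mono[OF _ c] power_mono) (simp_all add: x_def)
    finally have "norm y * norm ?u \<le> norm y * (c * norm y)"
      by (simp add: power2_eq_square mult_ac)
    moreover have "y \<noteq> 0" using False by auto
    ultimately show ?thesis by simp
  qed
qed

lemma psd_spec_norm_le_sum:
  assumes "finite I" "k \<in> I" "\<And>i. i \<in> I \<Longrightarrow> psd (T i)"
  shows "spec_norm (T k) \<le> spec_norm (\<Sum>i\<in>I. T i)"
proof (rule psd_spec_norm_le)
  show "psd (T k)" "0 \<le> spec_norm (\<Sum>i\<in>I. T i)" using assms by (simp_all add: spec_norm_nonneg)
  fix z
  have "inner z (T k *v z) \<le> (\<Sum>i\<in>I. inner z (T i *v z))"
    using assms by (intro member_le_sum) (auto simp: psd_iff_inner)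
  also have "\<dots> = inner z ((\<Sum>i\<in>I. T i) *v z)"
    by (simp add: sum_mult_vec inner_sum_right)
  also have "\<dots> \<le> spec_norm (\<Sum>i\<in>I. T i) * (norm z)\<^sup>2" by (rule inner_mult_vec_le_spec_norm)
  finally show "inner z (T k *v z) \<le> spec_norm (\<Sum>i\<in>I. T i) * (norm z)\<^sup>2" .
qed

section \<open>Integrals of random matrices\<close>

lemma bounded_linear_mult_vec_left: "bounded_linear (\<lambda>A::complex^'n^'m. A *v x)"
  by (auto intro!: linearI simp: linear_conv_bounded_linear[symmetric]
      matrix_vector_mult_add_rdistrib mult_vec_scaleR_left)

lemma integrable_spec_norm:
  fixes F :: "'a \<Rightarrow> complex^'n^'m"
  assumes "integrable M F"
  shows "integrable M (\<lambda>w. spec_norm (F w))"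
proof (rule Bochner_Integration.integrable_bound[OF integrable_norm[OF assms]])
  show "(\<lambda>w. spec_norm (F w)) \<in> borel_measurable M" using assms by measurable
qed (simp add: spec_norm_nonneg spec_norm_le_norm)

lemma spec_norm_integral_le:
  fixes F :: "'a \<Rightarrow> complex^'n^'m"
  assumes F: "integrable M F"
  shows "spec_norm (\<integral>w. F w \<partial>M) \<le> (\<integral>w. spec_norm (F w) \<partial>M)"
proof (rule spec_norm_leI)
  show "0 \<le> (\<integral>w. spec_norm (F w) \<partial>M)" by (simp add: spec_norm_nonneg)
  fix x
  have "norm ((\<integral>w. F w \<partial>M) *v x) = norm (\<integral>w. F w *v x \<partial>M)"
    by (simp add: integral_bounded_linear[OF bounded_linear_mult_vec_left F])
  also have "\<dots> \<le> (\<integral>w. norm (F w *v x) \<partial>M)" by (rule integral_norm_bound)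
  also have "\<dots> \<le> (\<integral>w. spec_norm (F w) * norm x \<partial>M)"
    using integrable_bounded_linear[OF bounded_linear_mult_vec_left F] integrable_spec_norm[OF F]
    by (intro integral_mono) (simp_all add: norm_mult_vec_le_spec_norm)
  finally show "norm ((\<integral>w. F w \<partial>M) *v x) \<le> (\<integral>w. spec_norm (F w) \<partial>M) * norm x" by simp
qed

text \<open>Valid without integrability assumptions, since a non-integrable \<open>F\<close> has Bochner integral \<open>0\<close>.\<close>
lemma spec_norm_integral_le_nn_integral:
  fixes F :: "'a \<Rightarrow> complex^'n^'m"
  assumes "\<And>w. spec_norm (F w) \<le> g w"
  shows "ennreal (spec_norm (\<integral>w. F w \<partial>M)) \<le> (\<integral>\<^sup>+w. ennreal (g w) \<partial>M)"
proof (cases "integrable M F")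
  case True
  have "ennreal (spec_norm (\<integral>w. F w \<partial>M)) \<le> (\<integral>\<^sup>+w. ennreal (spec_norm (F w)) \<partial>M)"
    using spec_norm_integral_le[OF True]
    by (simp add: nn_integral_eq_integral[OF integrable_spec_norm[OF True]] spec_norm_nonneg)
  also have "\<dots> \<le> (\<integral>\<^sup>+w. ennreal (g w) \<partial>M)"
    by (intro nn_integral_mono ennreal_leI assms)
  finally show ?thesis .
qed (simp add: not_integrable_integral_eq)

lemma (in prob_space) nn_integral_power2_le:
  fixes f :: "'a \<Rightarrow> real"
  assumes [measurable]: "f \<in> borel_measurable M" and nonneg: "\<And>x. 0 \<le> f x"
  shows "(\<integral>\<^sup>+x. ennreal (f x) \<partial>M)\<^sup>2 \<le> (\<integral>\<^sup>+x. ennreal ((f x)\<^sup>2) \<partial>M)"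
proof (cases "integrable M (\<lambda>x. (f x)\<^sup>2)")
  case True
  have f: "integrable M f" by (rule square_integrable_imp_integrable[OF _ True]) simp
  have "0 \<le> variance f" by (intro integral_nonneg_AE) simp
  then have "(\<integral>x. f x \<partial>M)\<^sup>2 \<le> (\<integral>x. (f x)\<^sup>2 \<partial>M)"
    using variance_eq[OF f True] by simp
  moreover have "0 \<le> (\<integral>x. f x \<partial>M)" by (simp add: integral_nonneg_AE nonneg)
  ultimately show ?thesis
    by (simp add: nn_integral_eq_integral f True nonneg ennreal_power ennreal_leI)
next
  case False
  then have "(\<integral>\<^sup>+x. ennreal ((f x)\<^sup>2) \<partial>M) = \<top>"
    by (simp add: integrable_iff_bounded not_less top_unique)
  then show ?thesis by simp
qed

text \<open>Jensen's inequality for the convex function \<open>z \<mapsto> \<parallel>c - z\<parallel>\<^sup>2\<close>.\<close>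
lemma spec_norm_power2_le_centered:
  fixes c :: "complex^'n^'m"
  assumes M: "prob_space M" and sets: "sets M = sets borel"
    and "integrable M (\<lambda>z. z)" "(\<integral>z. z \<partial>M) = 0"
  shows "ennreal ((spec_norm c)\<^sup>2) \<le> (\<integral>\<^sup>+z. ennreal ((spec_norm (c - z))\<^sup>2) \<partial>M)"
proof -
  interpret prob_space M by (rule M)
  have "(\<integral>z. c - z \<partial>M) = c"
    using assms by (simp add: integral_diff prob_space)
  then have "ennreal (spec_norm c) \<le> (\<integral>\<^sup>+z. ennreal (spec_norm (c - z)) \<partial>M)"
    using spec_norm_integral_le_nn_integral[of "\<lambda>z. c - z" "\<lambda>z. spec_norm (c - z)" M] by simp
  then have "(ennreal (spec_norm c))\<^sup>2 \<le> (\<integral>\<^sup>+z. ennreal (spec_norm (c - z)) \<partial>M)\<^sup>2"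
    by (rule power_mono) simp
  also have "\<dots> \<le> (\<integral>\<^sup>+z. ennreal ((spec_norm (c - z))\<^sup>2) \<partial>M)"
    by (rule nn_integral_power2_le) (simp_all add: spec_norm_nonneg measurable_cong_sets[OF sets refl])
  finally show ?thesis by (simp add: ennreal_power spec_norm_nonneg)
qed

section \<open>Symmetrization\<close>

lemma nn_integral_PiM_reindex:
  assumes prob: "\<And>k. k \<in> K \<Longrightarrow> prob_space (\<nu> k)"
    and f: "inj_on f I" "f \<in> I \<rightarrow> K" and \<nu>: "\<And>i. i \<in> I \<Longrightarrow> \<nu> (f i) = \<nu> i"
    and g: "g \<in> borel_measurable (PiM I \<nu>)"
  shows "(\<integral>\<^sup>+x. g (\<lambda>i\<in>I. x (f i)) \<partial>PiM K \<nu>) = (\<integral>\<^sup>+x. g x \<partial>PiM I \<nu>)"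
proof -
  have "PiM I (\<lambda>i. \<nu> (f i)) = PiM I \<nu>" by (rule PiM_cong) (simp_all add: \<nu>)
  then have distr: "distr (PiM K \<nu>) (PiM I \<nu>) (\<lambda>x. \<lambda>i\<in>I. x (f i)) = PiM I \<nu>"
    using distr_PiM_reindex[of K \<nu> f I, OF prob f] by simp
  have "(\<lambda>x. \<lambda>i\<in>I. x (f i)) \<in> measurable (PiM K \<nu>) (PiM I \<nu>)"
  proof (rule measurable_restrict)
    fix i assume "i \<in> I"
    then show "(\<lambda>x. x (f i)) \<in> measurable (PiM K \<nu>) (\<nu> i)"
      using f \<nu> measurable_component_singleton[of "f i" K \<nu>] by auto
  qed
  then show ?thesis
    using nn_integral_distr[of "\<lambda>x. \<lambda>i\<in>I. x (f i)" "PiM K \<nu>" "PiM I \<nu>" g] g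
    by (simp add: distr)
qed

definition signed_sum :: "'i set \<Rightarrow> 'i set \<Rightarrow> ('i \<Rightarrow> 'a::ab_group_add) \<Rightarrow> 'a" where
  "signed_sum I A D = (\<Sum>i\<in>I. if i \<in> A then - D i else D i)"

text \<open>Pair each sign pattern \<open>A\<close> with the pattern that agrees with it only at \<open>k\<close>: the two signed
  sums add up to \<open>\<plusminus>2 D k\<close>.\<close>
lemma spec_norm_power2_le_signed_sums:
  fixes D :: "'i \<Rightarrow> complex^'n^'m"
  assumes I: "finite I" and k: "k \<in> I"
  shows "2 ^ card I * (spec_norm (D k))\<^sup>2 \<le> (\<Sum>A\<in>Pow I. (spec_norm (signed_sum I A D))\<^sup>2)"
proof -
  let ?u = "\<lambda>A. signed_sum I A D"
  define \<sigma> where "\<sigma> A = (I - {k} - A) \<union> (A \<inter> {k})" for A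
  have bij: "bij_betw \<sigma> (Pow I) (Pow I)"
    by (rule bij_betwI[where g = \<sigma>]) (use k in \<open>auto simp: \<sigma>_def\<close>)
  have pair: "?u A + ?u (\<sigma> A) = 2 *\<^sub>R (if k \<in> A then - D k else D k)" if "A \<in> Pow I" for A
  proof -
    have "?u A + ?u (\<sigma> A) = (\<Sum>i\<in>I. if i = k then 2 *\<^sub>R (if k \<in> A then - D k else D k) else 0)"
      unfolding signed_sum_def sum.distrib[symmetric]
      by (rule sum.cong) (use that in \<open>auto simp: \<sigma>_def scaleR_2\<close>)
    then show ?thesis using I k by simp
  qed
  have each: "4 * (spec_norm (D k))\<^sup>2 \<le> 2 * (spec_norm (?u A))\<^sup>2 + 2 * (spec_norm (?u (\<sigma> A)))\<^sup>2"
    if "A \<in> Pow I" for A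
  proof -
    have "4 * (spec_norm (D k))\<^sup>2 = (spec_norm (?u A + ?u (\<sigma> A)))\<^sup>2"
      by (simp add: pair[OF that] spec_norm_scaleR power2_eq_square)
    also have "\<dots> \<le> 2 * (spec_norm (?u A))\<^sup>2 + 2 * (spec_norm (?u (\<sigma> A)))\<^sup>2"
      by (rule spec_norm_power2_add_le)
    finally show ?thesis .
  qed
  have "(\<Sum>A\<in>Pow I. 4 * (spec_norm (D k))\<^sup>2)
      \<le> (\<Sum>A\<in>Pow I. 2 * (spec_norm (?u A))\<^sup>2 + 2 * (spec_norm (?u (\<sigma> A)))\<^sup>2)"
    by (rule sum_mono) (rule each)
  also have "\<dots> = 2 * (\<Sum>A\<in>Pow I. (spec_norm (?u A))\<^sup>2) + 2 * (\<Sum>A\<in>Pow I. (spec_norm (?u (\<sigma> A)))\<^sup>2)"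
    by (simp add: sum.distrib sum_distrib_left)
  also have "(\<Sum>A\<in>Pow I. (spec_norm (?u (\<sigma> A)))\<^sup>2) = (\<Sum>A\<in>Pow I. (spec_norm (?u A))\<^sup>2)"
    using sum.reindex_bij_betw[OF bij, of "\<lambda>A. (spec_norm (?u A))\<^sup>2"] by simp
  finally show ?thesis using I by (simp add: card_Pow)
qed

text \<open>Coordinates \<open>1, \<dots>, n\<close> carry the distributions of the summands and coordinate \<open>i + n\<close> is an
  independent copy of coordinate \<open>i\<close>.\<close>
locale symmetrization =
  fixes \<nu> :: "nat \<Rightarrow> (complex^'n^'m) measure" and n :: nat
  assumes prob: "\<And>j. prob_space (\<nu> j)"
    and sets_borel: "\<And>j. sets (\<nu> j) = sets borel"
    and copy: "\<And>i. i \<in> {1..n} \<Longrightarrow> \<nu> (i + n) = \<nu> i"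
    and integrable_id: "\<And>i. i \<in> {1..n} \<Longrightarrow> integrable (\<nu> i) (\<lambda>z. z)"
    and centered: "\<And>i. i \<in> {1..n} \<Longrightarrow> (\<integral>z. z \<partial>\<nu> i) = 0"
begin

abbreviation "I \<equiv> {1..n}"
abbreviation "I' \<equiv> {n+1..2*n}"
abbreviation "J \<equiv> {1..2*n}"

sublocale product_sigma_finite \<nu>
  unfolding product_sigma_finite_def by (simp add: prob prob_space_imp_sigma_finite)

lemma measurable_borel: "f \<in> borel_measurable borel \<Longrightarrow> f \<in> borel_measurable (\<nu> j)"
  using measurable_cong_sets[OF sets_borel refl] by blast

lemma sets_PiM_eq: "sets (PiM L \<nu>) = sets (PiM L (\<lambda>_. borel))"
  by (rule sets_PiM_cong) (simp_all add: sets_borel)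

lemma measurable_PiM_borel:
  "f \<in> borel_measurable (PiM L (\<lambda>_. borel)) \<Longrightarrow> f \<in> borel_measurable (PiM L \<nu>)"
  using measurable_cong_sets[OF sets_PiM_eq refl] by blast

lemma nn_integral_copy_component:
  assumes i: "i \<in> I" and g: "g \<in> borel_measurable borel"
  shows "(\<integral>\<^sup>+y. g (y (i + n)) \<partial>PiM I' \<nu>) = (\<integral>\<^sup>+z. g z \<partial>\<nu> i)"
proof -
  have i': "i + n \<in> I'" using i by auto
  have "(\<integral>\<^sup>+z. g z \<partial>\<nu> i) = (\<integral>\<^sup>+z. g z \<partial>distr (PiM I' \<nu>) (\<nu> (i + n)) (\<lambda>y. y (i + n)))"
    using distr_PiM_component[of I' \<nu> "i + n"] prob copy[OF i] i' by simp
  also have "\<dots> = (\<integral>\<^sup>+y. g (y (i + n)) \<partial>PiM I' \<nu>)"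
    by (rule nn_integral_distr[OF measurable_component_singleton[OF i']]) (simp add: measurable_borel g)
  finally show ?thesis by simp
qed

text \<open>Conditionally on the first half of the coordinates, Jensen's inequality with respect to the
  centred copy gives \<open>\<parallel>x\<^sub>i\<parallel>\<^sup>2 \<le> E' \<parallel>x\<^sub>i - x'\<^sub>i\<parallel>\<^sup>2\<close>.\<close>
lemma nn_integral_Max_le_symmetrized:
  "(\<integral>\<^sup>+x. (SUP i\<in>I. ennreal ((spec_norm (x i))\<^sup>2)) \<partial>PiM I \<nu>)
   \<le> (\<integral>\<^sup>+x. (SUP i\<in>I. ennreal ((spec_norm (x i - x (i + n)))\<^sup>2)) \<partial>PiM J \<nu>)"
proof -
  define H where "H x = (SUP i\<in>I. ennreal ((spec_norm (x i - x (i + n)))\<^sup>2))"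
    for x :: "nat \<Rightarrow> complex^'n^'m"
  have J_split: "J = I \<union> I'" and "I \<inter> I' = {}" by auto
  have "H \<in> borel_measurable (PiM (I \<union> I') \<nu>)"
    unfolding H_def J_split[symmetric] by (rule measurable_PiM_borel) measurable
  then have fold: "(\<integral>\<^sup>+x. H x \<partial>PiM J \<nu>) = (\<integral>\<^sup>+x. (\<integral>\<^sup>+y. H (merge I I' (x, y)) \<partial>PiM I' \<nu>) \<partial>PiM I \<nu>)"
    unfolding J_split using product_nn_integral_fold[OF \<open>I \<inter> I' = {}\<close>] by simp
  have "ennreal ((spec_norm (x i))\<^sup>2) \<le> (\<integral>\<^sup>+y. H (merge I I' (x, y)) \<partial>PiM I' \<nu>)" if i: "i \<in> I" for x i
  proof -
    have "ennreal ((spec_norm (x i))\<^sup>2) \<le> (\<integral>\<^sup>+z. ennreal ((spec_norm (x i - z))\<^sup>2) \<partial>\<nu> i)"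
      by (rule spec_norm_power2_le_centered[OF prob sets_borel integrable_id[OF i] centered[OF i]])
    also have "\<dots> = (\<integral>\<^sup>+y. ennreal ((spec_norm (x i - y (i + n)))\<^sup>2) \<partial>PiM I' \<nu>)"
      by (rule nn_integral_copy_component[OF i, symmetric]) measurable
    also have "\<dots> \<le> (\<integral>\<^sup>+y. H (merge I I' (x, y)) \<partial>PiM I' \<nu>)"
      using i by (intro nn_integral_mono) (auto simp: H_def merge_def intro!: SUP_upper2[of i])
    finally show ?thesis .
  qed
  then show ?thesis
    unfolding fold H_def[symmetric] by (intro nn_integral_mono SUP_least) auto
qed

definition swap_copies :: "nat set \<Rightarrow> nat \<Rightarrow> nat" where
  "swap_copies A j = (if j \<in> A then j + n else if n < j \<and> j - n \<in> A then j - n else j)"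

lemma swap_copies_reindex:
  assumes "A \<subseteq> I"
  shows "inj_on (swap_copies A) J" "swap_copies A \<in> J \<rightarrow> J" "\<And>j. j \<in> J \<Longrightarrow> \<nu> (swap_copies A j) = \<nu> j"
proof -
  have "swap_copies A (swap_copies A j) = j" if "j \<in> J" for j
    using assms that by (auto simp: swap_copies_def subset_iff)
  then show "inj_on (swap_copies A) J" by (metis inj_onI)
  show "swap_copies A \<in> J \<rightarrow> J" using assms by (auto simp: swap_copies_def subset_iff)
  show "\<nu> (swap_copies A j) = \<nu> j" if "j \<in> J" for j
    using assms that copy[of j] copy[of "j - n"] by (auto simp: swap_copies_def subset_iff)
qed

text \<open>Exchanging \<open>x\<^sub>i\<close> and its copy for \<open>i \<in> A\<close> preserves the product measure and flips the sign
  of \<open>x\<^sub>i - x\<^sub>i\<^sub>+\<^sub>n\<close>.\<close>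
lemma nn_integral_signed_sum_eq:
  assumes A: "A \<subseteq> I"
  shows "(\<integral>\<^sup>+x. ennreal ((spec_norm (signed_sum I A (\<lambda>i. x i - x (i + n))))\<^sup>2) \<partial>PiM J \<nu>)
       = (\<integral>\<^sup>+x. ennreal ((spec_norm (\<Sum>i\<in>I. x i - x (i + n)))\<^sup>2) \<partial>PiM J \<nu>)"
proof -
  define g where "g x = ennreal ((spec_norm (\<Sum>i\<in>I. x i - x (i + n)))\<^sup>2)"
    for x :: "nat \<Rightarrow> complex^'n^'m"
  have "g (\<lambda>j\<in>J. x (swap_copies A j)) = ennreal ((spec_norm (signed_sum I A (\<lambda>i. x i - x (i + n))))\<^sup>2)"
    for x
    unfolding g_def signed_sum_def using A
    by (intro arg_cong[where f = "\<lambda>B. ennreal ((spec_norm B)\<^sup>2)"] sum.cong)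
       (auto simp: swap_copies_def subset_iff)
  moreover have "g \<in> borel_measurable (PiM J \<nu>)"
    unfolding g_def by (rule measurable_PiM_borel) measurable
  ultimately show ?thesis
    using nn_integral_PiM_reindex[where \<nu> = \<nu>, OF prob swap_copies_reindex[OF A], of g] by (simp add: g_def)
qed

lemma nn_integral_symmetrized_le:
  "(\<integral>\<^sup>+x. ennreal ((spec_norm (\<Sum>i\<in>I. x i - x (i + n)))\<^sup>2) \<partial>PiM J \<nu>)
   \<le> 4 * (\<integral>\<^sup>+x. ennreal ((spec_norm (\<Sum>i\<in>I. x i))\<^sup>2) \<partial>PiM I \<nu>)"
proof -
  define g where "g x = ennreal ((spec_norm (\<Sum>i\<in>I. x i))\<^sup>2)" for x :: "nat \<Rightarrow> complex^'n^'m"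
  have g: "g \<in> borel_measurable (PiM I \<nu>)"
    unfolding g_def by (rule measurable_PiM_borel) measurable
  have m: "(\<lambda>x. g (\<lambda>i\<in>I. x i)) \<in> borel_measurable (PiM J \<nu>)"
    "(\<lambda>x. g (\<lambda>i\<in>I. x (i + n))) \<in> borel_measurable (PiM J \<nu>)"
    unfolding g_def by (rule measurable_PiM_borel, simp cong: sum.cong, measurable)+
  have half: "(\<integral>\<^sup>+x. g (\<lambda>i\<in>I. x (f i)) \<partial>PiM J \<nu>) = (\<integral>\<^sup>+x. g x \<partial>PiM I \<nu>)"
    if "f \<in> I \<rightarrow> J" "inj_on f I" "\<And>i. i \<in> I \<Longrightarrow> \<nu> (f i) = \<nu> i" for f
    by (rule nn_integral_PiM_reindex[where \<nu> = \<nu>, OF prob that(2,1,3) g])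
  have "ennreal ((spec_norm (\<Sum>i\<in>I. x i - x (i + n)))\<^sup>2)
      \<le> 2 * g (\<lambda>i\<in>I. x i) + 2 * g (\<lambda>i\<in>I. x (i + n))" for x
  proof -
    have "(\<Sum>i\<in>I. x i - x (i + n)) = (\<Sum>i\<in>I. x i) + - (\<Sum>i\<in>I. x (i + n))"
      by (simp add: sum_subtractf)
    then have "(spec_norm (\<Sum>i\<in>I. x i - x (i + n)))\<^sup>2
        \<le> 2 * (spec_norm (\<Sum>i\<in>I. x i))\<^sup>2 + 2 * (spec_norm (\<Sum>i\<in>I. x (i + n)))\<^sup>2"
      using spec_norm_power2_add_le[of "\<Sum>i\<in>I. x i" "- (\<Sum>i\<in>I. x (i + n))"] by simp
    then have "ennreal ((spec_norm (\<Sum>i\<in>I. x i - x (i + n)))\<^sup>2)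
        \<le> ennreal (2 * (spec_norm (\<Sum>i\<in>I. x i))\<^sup>2 + 2 * (spec_norm (\<Sum>i\<in>I. x (i + n)))\<^sup>2)"
      by (rule ennreal_leI)
    then show ?thesis
      by (simp add: g_def ennreal_plus ennreal_mult)
  qed
  then have "(\<integral>\<^sup>+x. ennreal ((spec_norm (\<Sum>i\<in>I. x i - x (i + n)))\<^sup>2) \<partial>PiM J \<nu>)
      \<le> (\<integral>\<^sup>+x. 2 * g (\<lambda>i\<in>I. x i) + 2 * g (\<lambda>i\<in>I. x (i + n)) \<partial>PiM J \<nu>)"
    by (rule nn_integral_mono)
  also have "\<dots> = 2 * (\<integral>\<^sup>+x. g (\<lambda>i\<in>I. x i) \<partial>PiM J \<nu>) + 2 * (\<integral>\<^sup>+x. g (\<lambda>i\<in>I. x (i + n)) \<partial>PiM J \<nu>)"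
    using m by (simp add: nn_integral_add nn_integral_cmult)
  also have "\<dots> = 4 * (\<integral>\<^sup>+x. g x \<partial>PiM I \<nu>)"
    using half[of "\<lambda>i. i"] half[of "\<lambda>i. i + n"] copy
    by (simp add: Pi_iff inj_on_def flip: distrib_right)
  finally show ?thesis by (simp add: g_def)
qed

text \<open>With \<open>D\<^sub>i = x\<^sub>i - x\<^sub>i\<^sub>+\<^sub>n\<close>:
  \<open>2\<^sup>n E max\<^sub>i \<parallel>D\<^sub>i\<parallel>\<^sup>2 \<le> \<Sum>\<^sub>A E \<parallel>signed_sum I A D\<parallel>\<^sup>2 = 2\<^sup>n E \<parallel>\<Sum>\<^sub>i D\<^sub>i\<parallel>\<^sup>2\<close>.\<close>
lemma nn_integral_Max_le_sum:
  "(\<integral>\<^sup>+x. (SUP i\<in>I. ennreal ((spec_norm (x i))\<^sup>2)) \<partial>PiM I \<nu>)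
   \<le> 4 * (\<integral>\<^sup>+x. ennreal ((spec_norm (\<Sum>i\<in>I. x i))\<^sup>2) \<partial>PiM I \<nu>)"
proof -
  define c :: ennreal where "c = 2 ^ n"
  define H where "H x = (SUP i\<in>I. ennreal ((spec_norm (x i - x (i + n)))\<^sup>2))"
    for x :: "nat \<Rightarrow> complex^'n^'m"
  define U where "U A x = ennreal ((spec_norm (signed_sum I A (\<lambda>i. x i - x (i + n))))\<^sup>2)"
    for A and x :: "nat \<Rightarrow> complex^'n^'m"
  have mH: "H \<in> borel_measurable (PiM J \<nu>)" and mU: "U A \<in> borel_measurable (PiM J \<nu>)" for A
    unfolding H_def U_def signed_sum_def by (rule measurable_PiM_borel, measurable)+
  have pointwise: "c * H x \<le> (\<Sum>A\<in>Pow I. U A x)" for x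
  proof -
    have "c * ennreal ((spec_norm (x k - x (k + n)))\<^sup>2) \<le> (\<Sum>A\<in>Pow I. U A x)" if "k \<in> I" for k
    proof -
      have "c * ennreal ((spec_norm (x k - x (k + n)))\<^sup>2) = ennreal (2 ^ n * (spec_norm (x k - x (k + n)))\<^sup>2)"
        by (simp add: c_def ennreal_mult flip: ennreal_power)
      also have "\<dots> \<le> ennreal (\<Sum>A\<in>Pow I. (spec_norm (signed_sum I A (\<lambda>i. x i - x (i + n))))\<^sup>2)"
        using spec_norm_power2_le_signed_sums[of I k "\<lambda>i. x i - x (i + n)"] that by (intro ennreal_leI) simp
      finally show ?thesis by (simp add: U_def)
    qed
    then show ?thesis
      unfolding H_def SUP_mult_left_ennreal by (rule SUP_least)
  qed
  have "c * (\<integral>\<^sup>+x. (SUP i\<in>I. ennreal ((spec_norm (x i))\<^sup>2)) \<partial>PiM I \<nu>) \<le> c * (\<integral>\<^sup>+x. H x \<partial>PiM J \<nu>)"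
    unfolding H_def by (intro mult_left_mono nn_integral_Max_le_symmetrized) simp
  also have "\<dots> = (\<integral>\<^sup>+x. c * H x \<partial>PiM J \<nu>)"
    by (rule nn_integral_cmult[OF mH, symmetric])
  also have "\<dots> \<le> (\<integral>\<^sup>+x. (\<Sum>A\<in>Pow I. U A x) \<partial>PiM J \<nu>)"
    by (rule nn_integral_mono) (rule pointwise)
  also have "\<dots> = (\<Sum>A\<in>Pow I. \<integral>\<^sup>+x. U A x \<partial>PiM J \<nu>)"
    by (rule nn_integral_sum) (rule mU)
  also have "\<dots> = (\<Sum>A\<in>Pow I. \<integral>\<^sup>+x. ennreal ((spec_norm (\<Sum>i\<in>I. x i - x (i + n)))\<^sup>2) \<partial>PiM J \<nu>)"
    unfolding U_def by (rule sum.cong[OF refl nn_integral_signed_sum_eq]) simp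
  also have "\<dots> = c * (\<integral>\<^sup>+x. ennreal ((spec_norm (\<Sum>i\<in>I. x i - x (i + n)))\<^sup>2) \<partial>PiM J \<nu>)"
    by (simp add: card_Pow c_def)
  also have "\<dots> \<le> c * (4 * (\<integral>\<^sup>+x. ennreal ((spec_norm (\<Sum>i\<in>I. x i))\<^sup>2) \<partial>PiM I \<nu>))"
    by (intro mult_left_mono nn_integral_symmetrized_le) simp
  finally show ?thesis
    using ennreal_mult_le_mult_iff[of c] by (simp add: c_def power_eq_top_ennreal)
qed

end

lemma (in prob_space) nn_integral_indep_vars_eq_PiM:
  assumes I: "I \<noteq> {}" and indep: "indep_vars (\<lambda>_. borel) X I"
    and g: "g \<in> borel_measurable (PiM I (\<lambda>_. borel))"
  shows "(\<integral>\<^sup>+w. g (\<lambda>i\<in>I. X i w) \<partial>M) = (\<integral>\<^sup>+x. g x \<partial>PiM I (\<lambda>i. distr M borel (X i)))"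
proof -
  have X: "X i \<in> borel_measurable M" if "i \<in> I" for i
    using indep that by (simp add: indep_vars_def)
  then have "distr M (PiM I (\<lambda>_. borel)) (\<lambda>w. \<lambda>i\<in>I. X i w) = PiM I (\<lambda>i. distr M borel (X i))"
    using indep_vars_iff_distr_eq_PiM'[OF I, where M' = "\<lambda>_. borel" and X = X] indep by simp
  moreover have "(\<lambda>w. \<lambda>i\<in>I. X i w) \<in> measurable M (PiM I (\<lambda>_. borel))"
    by (rule measurable_restrict) (rule X)
  ultimately show ?thesis
    using nn_integral_distr[of "\<lambda>w. \<lambda>i\<in>I. X i w" M "PiM I (\<lambda>_. borel)" g] g by simp
qed

text \<open>The summands are extended by \<open>0\<close> outside \<open>{1..n}\<close> so that every coordinate of the
  product space carries a probability measure.\<close>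
lemma (in prob_space) nn_integral_Max_spec_norm_power2_le:
  fixes S :: "nat \<Rightarrow> 'a \<Rightarrow> complex^'n^'m"
  assumes indep: "indep_vars (\<lambda>_. borel) S {1..n}"
    and integrable: "\<And>i. i \<in> {1..n} \<Longrightarrow> integrable M (S i)"
    and centered: "\<And>i. i \<in> {1..n} \<Longrightarrow> (\<integral>w. S i w \<partial>M) = 0"
  shows "(\<integral>\<^sup>+w. (SUP i\<in>{1..n}. ennreal ((spec_norm (S i w))\<^sup>2)) \<partial>M)
    \<le> 4 * (\<integral>\<^sup>+w. ennreal ((spec_norm (\<Sum>i=1..n. S i w))\<^sup>2) \<partial>M)"
proof (cases "n = 0")
  case False
  have S: "S i \<in> borel_measurable M" if "i \<in> {1..n}" for i
    using indep that by (simp add: indep_vars_def)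
  define S' where "S' i = (if i \<in> {1..n} then S i else (\<lambda>_. 0))" for i
  define \<nu> where "\<nu> j = distr M borel (S' (if j \<le> n then j else j - n))" for j
  have \<nu>: "\<nu> i = distr M borel (S i)" if "i \<in> {1..n}" for i
    using that by (simp add: \<nu>_def S'_def)
  interpret symmetrization \<nu> n
  proof (rule symmetrization.intro)
    show "prob_space (\<nu> j)" for j
      unfolding \<nu>_def by (rule prob_space_distr) (use S in \<open>simp add: S'_def\<close>)
    show "sets (\<nu> j) = sets borel" for j by (simp add: \<nu>_def)
    show "\<nu> (i + n) = \<nu> i" if "i \<in> {1..n}" for i using that by (simp add: \<nu>_def)
    show "integrable (\<nu> i) (\<lambda>z. z)" "(\<integral>z. z \<partial>\<nu> i) = 0" if "i \<in> {1..n}" for i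
      using that S integrable centered by (simp_all add: \<nu> integrable_distr_eq integral_distr)
  qed
  have PiM: "PiM {1..n} (\<lambda>i. distr M borel (S i)) = PiM {1..n} \<nu>"
    by (rule PiM_cong) (simp_all add: \<nu>)
  have "(\<integral>\<^sup>+w. (SUP i\<in>{1..n}. ennreal ((spec_norm (S i w))\<^sup>2)) \<partial>M)
      = (\<integral>\<^sup>+x. (SUP i\<in>{1..n}. ennreal ((spec_norm (x i))\<^sup>2)) \<partial>PiM {1..n} (\<lambda>i. distr M borel (S i)))"
    using nn_integral_indep_vars_eq_PiM[OF _ indep, of "\<lambda>x. SUP i\<in>{1..n}. ennreal ((spec_norm (x i))\<^sup>2)"]
      False by simp
  also have "\<dots> \<le> 4 * (\<integral>\<^sup>+x. ennreal ((spec_norm (\<Sum>i=1..n. x i))\<^sup>2) \<partial>PiM {1..n} (\<lambda>i. distr M borel (S i)))"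
    unfolding PiM by (rule nn_integral_Max_le_sum)
  also have "\<dots> = 4 * (\<integral>\<^sup>+w. ennreal ((spec_norm (\<Sum>i=1..n. S i w))\<^sup>2) \<partial>M)"
    using nn_integral_indep_vars_eq_PiM[OF _ indep, of "\<lambda>x. ennreal ((spec_norm (\<Sum>i=1..n. x i))\<^sup>2)"]
      False by simp
  finally show ?thesis .
qed (simp add: bot_ennreal)

section \<open>The lower bounds\<close>

lemma esqrt_mono: "a \<le> b \<Longrightarrow> esqrt a \<le> esqrt b"
  by (cases "b = \<top>")
     (auto simp: esqrt_def top_unique enn2real_mono top.not_eq_extremum intro!: ennreal_leI)

lemma esqrt_power2 [simp]: "(esqrt a)\<^sup>2 = a"
  by (cases a) (simp_all add: esqrt_def ennreal_power)

lemma esqrt_mult_4: "esqrt (4 * a) = 2 * esqrt a"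
  by (cases a) (simp_all add: esqrt_def ennreal_mult_top enn2real_mult real_sqrt_mult ennreal_mult
      ennreal_mult_eq_top_iff flip: ennreal_numeral)

lemma quarter_power2_esqrt_add_le:
  assumes "a \<le> L" "b \<le> L"
  shows "1/4 * (esqrt a + esqrt b)\<^sup>2 \<le> L"
proof -
  have "(esqrt a + esqrt b)\<^sup>2 \<le> (2 * esqrt L)\<^sup>2"
    using add_mono[OF esqrt_mono[OF assms(1)] esqrt_mono[OF assms(2)]] by (intro power_mono) (simp_all add: mult_2)
  then have "1/4 * (esqrt a + esqrt b)\<^sup>2 \<le> 1/4 * (4 * L)"
    by (intro mult_left_mono) (simp_all add: power_mult_distrib)
  also have "\<dots> = L"
    by (simp add: ennreal_divide_times mult.commute[of 4] mult_divide_eq_ennreal)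
  finally show ?thesis .
qed

lemma half_add_quarter_esqrt_le:
  assumes "c \<le> esqrt L" "b \<le> 4 * L"
  shows "1/2 * c + 1/4 * esqrt b \<le> esqrt L"
proof -
  have quarter_2: "(1::ennreal) / 4 * 2 = 1 / 2"
    using divide_mult_eq[of "2::ennreal" 1 2] by (simp add: ennreal_divide_times)
  have "1/4 * esqrt b \<le> 1/4 * (2 * esqrt L)"
    using esqrt_mono[OF assms(2)] by (intro mult_left_mono) (simp_all add: esqrt_mult_4)
  also have "\<dots> = 1/2 * esqrt L"
    using quarter_2 by (simp flip: mult.assoc)
  finally have "1/2 * c + 1/4 * esqrt b \<le> 1/2 * esqrt L + 1/2 * esqrt L"
    using assms(1) by (intro add_mono mult_left_mono) simp_all
  then show ?thesis by (simp flip: distrib_right add_divide_distrib_ennreal)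
qed

lemma nn_integral_spec_norm_sum_psd_ge:
  fixes T :: "'i \<Rightarrow> 'a \<Rightarrow> complex^'d^'d"
  assumes "finite I" and psd: "\<And>i w. i \<in> I \<Longrightarrow> w \<in> space M \<Longrightarrow> psd (T i w)"
  shows "1/4 * (esqrt (ennreal (spec_norm (\<integral>w. (\<Sum>i\<in>I. T i w) \<partial>M)))
                + esqrt (\<integral>\<^sup>+w. (SUP i\<in>I. ennreal (spec_norm (T i w))) \<partial>M))\<^sup>2
    \<le> (\<integral>\<^sup>+w. ennreal (spec_norm (\<Sum>i\<in>I. T i w)) \<partial>M)"
proof (rule quarter_power2_esqrt_add_le)
  show "ennreal (spec_norm (\<integral>w. (\<Sum>i\<in>I. T i w) \<partial>M)) \<le> (\<integral>\<^sup>+w. ennreal (spec_norm (\<Sum>i\<in>I. T i w)) \<partial>M)"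
    by (rule spec_norm_integral_le_nn_integral) simp
  show "(\<integral>\<^sup>+w. (SUP i\<in>I. ennreal (spec_norm (T i w))) \<partial>M) \<le> (\<integral>\<^sup>+w. ennreal (spec_norm (\<Sum>i\<in>I. T i w)) \<partial>M)"
    using assms by (intro nn_integral_mono SUP_least ennreal_leI psd_spec_norm_le_sum) auto
qed

lemma (in prob_space) esqrt_second_moment_ge:
  fixes S :: "nat \<Rightarrow> 'a \<Rightarrow> complex^'d2^'d1"
  assumes indep: "indep_vars (\<lambda>_. borel) S {1..n}"
    and integrable: "\<And>i. i \<in> {1..n} \<Longrightarrow> integrable M (S i)"
    and centered: "\<And>i. i \<in> {1..n} \<Longrightarrow> (\<integral>w. S i w \<partial>M) = 0"
  shows "1/2 * max (esqrt (ennreal (spec_norm (\<integral>w. (\<Sum>i=1..n. S i w) ** ctrans (\<Sum>i=1..n. S i w) \<partial>M))))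
                   (esqrt (ennreal (spec_norm (\<integral>w. ctrans (\<Sum>i=1..n. S i w) ** (\<Sum>i=1..n. S i w) \<partial>M))))
      + 1/4 * esqrt (\<integral>\<^sup>+w. (SUP i\<in>{1..n}. ennreal ((spec_norm (S i w))\<^sup>2)) \<partial>M)
    \<le> esqrt (\<integral>\<^sup>+w. ennreal ((spec_norm (\<Sum>i=1..n. S i w))\<^sup>2) \<partial>M)"
proof (rule half_add_quarter_esqrt_le)
  let ?Z = "\<lambda>w. \<Sum>i=1..n. S i w"
  have "ennreal (spec_norm (\<integral>w. ?Z w ** ctrans (?Z w) \<partial>M)) \<le> (\<integral>\<^sup>+w. ennreal ((spec_norm (?Z w))\<^sup>2) \<partial>M)"
    "ennreal (spec_norm (\<integral>w. ctrans (?Z w) ** ?Z w \<partial>M)) \<le> (\<integral>\<^sup>+w. ennreal ((spec_norm (?Z w))\<^sup>2) \<partial>M)"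
    by (simp_all add: spec_norm_integral_le_nn_integral spec_norm_mult_ctrans_le spec_norm_ctrans_mult_le)
  then show "max (esqrt (ennreal (spec_norm (\<integral>w. ?Z w ** ctrans (?Z w) \<partial>M))))
                 (esqrt (ennreal (spec_norm (\<integral>w. ctrans (?Z w) ** ?Z w \<partial>M))))
      \<le> esqrt (\<integral>\<^sup>+w. ennreal ((spec_norm (?Z w))\<^sup>2) \<partial>M)"
    by (simp add: esqrt_mono)
  show "(\<integral>\<^sup>+w. (SUP i\<in>{1..n}. ennreal ((spec_norm (S i w))\<^sup>2)) \<partial>M)
      \<le> 4 * (\<integral>\<^sup>+w. ennreal ((spec_norm (?Z w))\<^sup>2) \<partial>M)"
    by (rule nn_integral_Max_spec_norm_power2_le[OF indep integrable centered])
qed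

lemma (in prob_space) esqrt_second_moment_hermitian_ge:
  fixes Y :: "nat \<Rightarrow> 'a \<Rightarrow> complex^'d^'d"
  assumes indep: "indep_vars (\<lambda>_. borel) Y {1..n}"
    and integrable: "\<And>i. i \<in> {1..n} \<Longrightarrow> integrable M (Y i)"
    and centered: "\<And>i. i \<in> {1..n} \<Longrightarrow> (\<integral>w. Y i w \<partial>M) = 0"
    and hermitian: "\<And>i w. i \<in> {1..n} \<Longrightarrow> w \<in> space M \<Longrightarrow> hermitian (Y i w)"
  shows "1/2 * esqrt (ennreal (spec_norm (\<integral>w. (\<Sum>i=1..n. Y i w) ** (\<Sum>i=1..n. Y i w) \<partial>M)))
      + 1/4 * esqrt (\<integral>\<^sup>+w. (SUP i\<in>{1..n}. ennreal ((spec_norm (Y i w))\<^sup>2)) \<partial>M)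
    \<le> esqrt (\<integral>\<^sup>+w. ennreal ((spec_norm (\<Sum>i=1..n. Y i w))\<^sup>2) \<partial>M)"
proof -
  have "ctrans (\<Sum>i=1..n. Y i w) = (\<Sum>i=1..n. Y i w)" if "w \<in> space M" for w
    unfolding ctrans_sum using hermitian that by (intro sum.cong) (auto simp: hermitian_def)
  then have "(\<integral>w. (\<Sum>i=1..n. Y i w) ** (\<Sum>i=1..n. Y i w) \<partial>M)
      = (\<integral>w. (\<Sum>i=1..n. Y i w) ** ctrans (\<Sum>i=1..n. Y i w) \<partial>M)"
    by (intro Bochner_Integration.integral_cong) simp_all
  then have "1/2 * esqrt (ennreal (spec_norm (\<integral>w. (\<Sum>i=1..n. Y i w) ** (\<Sum>i=1..n. Y i w) \<partial>M)))
      \<le> 1/2 * max (esqrt (ennreal (spec_norm (\<integral>w. (\<Sum>i=1..n. Y i w) ** ctrans (\<Sum>i=1..n. Y i w) \<partial>M))))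
                   (esqrt (ennreal (spec_norm (\<integral>w. ctrans (\<Sum>i=1..n. Y i w) ** (\<Sum>i=1..n. Y i w) \<partial>M))))"
    by (intro mult_left_mono) simp_all
  then show ?thesis
    using esqrt_second_moment_ge[OF indep integrable centered] by (rule order_trans[OF add_right_mono])
qed

theorem theorem6p1:
  fixes M :: "'a measure"
  assumes "prob_space M"
  shows
  "(\<forall>(n::nat) (T :: nat \<Rightarrow> 'a \<Rightarrow> complex^'d^'d).
      prob_space.indep_vars M (\<lambda>_. borel) T {1..n}
      \<and> (\<forall>i\<in>{1..n}. integrable M (T i) \<and> (\<forall>\<omega>\<in>space M. psd (T i \<omega>)))
      \<longrightarrow> (let W = (\<lambda>\<omega>. \<Sum>i=1..n. T i \<omega>) in
            (\<integral>\<^sup>+\<omega>. ennreal (spec_norm (W \<omega>)) \<partial>M)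
            \<ge> 1/4 * (esqrt (ennreal (spec_norm (\<integral>\<omega>. W \<omega> \<partial>M)))
                     + esqrt (\<integral>\<^sup>+\<omega>. (SUP i\<in>{1..n}. ennreal (spec_norm (T i \<omega>))) \<partial>M))\<^sup>2))
   \<and>
   (\<forall>(n::nat) (Y :: nat \<Rightarrow> 'a \<Rightarrow> complex^'d^'d).
      prob_space.indep_vars M (\<lambda>_. borel) Y {1..n}
      \<and> (\<forall>i\<in>{1..n}. integrable M (Y i) \<and> (\<integral>\<omega>. Y i \<omega> \<partial>M) = 0
                     \<and> (\<forall>\<omega>\<in>space M. hermitian (Y i \<omega>)))
      \<longrightarrow> (let X = (\<lambda>\<omega>. \<Sum>i=1..n. Y i \<omega>) in
            esqrt (\<integral>\<^sup>+\<omega>. ennreal ((spec_norm (X \<omega>))\<^sup>2) \<partial>M)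
            \<ge> 1/2 * esqrt (ennreal (spec_norm (\<integral>\<omega>. X \<omega> ** X \<omega> \<partial>M)))
              + 1/4 * esqrt (\<integral>\<^sup>+\<omega>. (SUP i\<in>{1..n}. ennreal ((spec_norm (Y i \<omega>))\<^sup>2)) \<partial>M)))
   \<and>
   (\<forall>(n::nat) (S :: nat \<Rightarrow> 'a \<Rightarrow> complex^'d2^'d1).
      prob_space.indep_vars M (\<lambda>_. borel) S {1..n}
      \<and> (\<forall>i\<in>{1..n}. integrable M (S i) \<and> (\<integral>\<omega>. S i \<omega> \<partial>M) = 0)
      \<longrightarrow> (let Z = (\<lambda>\<omega>. \<Sum>i=1..n. S i \<omega>) in
            esqrt (\<integral>\<^sup>+\<omega>. ennreal ((spec_norm (Z \<omega>))\<^sup>2) \<partial>M)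
            \<ge> 1/2 * max (esqrt (ennreal (spec_norm (\<integral>\<omega>. Z \<omega> ** ctrans (Z \<omega>) \<partial>M))))
                         (esqrt (ennreal (spec_norm (\<integral>\<omega>. ctrans (Z \<omega>) ** Z \<omega> \<partial>M))))
              + 1/4 * esqrt (\<integral>\<^sup>+\<omega>. (SUP i\<in>{1..n}. ennreal ((spec_norm (S i \<omega>))\<^sup>2)) \<partial>M)))"
proof -
  interpret prob_space M by (rule assms)
  show ?thesis
    unfolding Let_def
    by (intro conjI allI impI; elim conjE)
       (rule nn_integral_spec_norm_sum_psd_ge esqrt_second_moment_hermitian_ge esqrt_second_moment_ge; auto)+
qed

end
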